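(* Let $S\subseteq\mathbb{R}^n\times\mathbb{R}^m$ be convex, let the convex projection (CP) be self-bounded, fix $p\in[1,\infty]$ and $\epsilon>0$. If $\bar S\subseteq S$ is a finite $\epsilon$-solution of (CP) (under the $p$-norm), then $\bar S$ is a finite $(\underline{\kappa}\epsilon)$-solution of (MOCP) (under the $p$-norm), where $\underline{\kappa}=\underline{\kappa}(m,p)=m^{\frac{p-1}{p}}(m+1)^{\frac1p}$ (equal to $m$ for $p=\infty$).
   Context: $\|\cdot\|_p$ is the $p$-norm and $B_\epsilon$ the closed $\epsilon$-ball around $0$ in it. (CP): compute $Y=\{y:\exists x,(x,y)\in S\}$; recession cone $A_\infty=\{y: x+\lambda y\in A\ \forall x\in A,\lambda\ge0\}$. (CP) is self-bounded if $Y\ne\mathbb{R}^m$ and $Y\subseteq\operatorname{conv}\{y^{(1)},\dots,y^{(k)}\}+(\operatorname{cl}Y)_\infty$ for finitely many points $y^{(i)}$ (this includes the bounded case $Y\subseteq B_K$, where $(\operatorname{cl}Y)_\infty=\{0\}$). A nonempty finite $\bar S\subseteq S$ is a finite $\epsilon$-solution of (CP) if $Y\subseteq\operatorname{conv}\operatorname{proj}_y[\bar S]+(\operatorname{cl}Y)_\infty+B_\epsilon$. (MOCP): minimize $P(x,y)=(y,-\mathbf{1}^\top y)$ w.r.t. $\le_{\mathbb{R}^{m+1}_+}$ over $(x,y)\in S$, upper image $\mathcal{P}=\operatorname{cl}(P[S]+\mathbb{R}^{m+1}_+)$; $\mathbb{1}\in\mathbb{R}^{m+1}$ is the all-ones vector.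 For self-bounded (MOCP), a nonempty finite $\bar S\subseteq S$ is a finite $\epsilon$-solution of (MOCP) if $\mathcal{P}\subseteq\operatorname{conv}P[\bar S]+\mathcal{P}_\infty-\epsilon\{\|\mathbb{1}\|_p^{-1}\mathbb{1}\}$. *)

theory Defs
  imports "HOL-Analysis.Analysis" "HOL-Library.Extended_Real"
begin

definition pnorm :: "ereal \<Rightarrow> real^'k \<Rightarrow> real" where
  "pnorm p v = (if p = \<infinity> then Max (range (\<lambda>i. \<bar>v $ i\<bar>))
                else (\<Sum>i\<in>UNIV. \<bar>v $ i\<bar> powr real_of_ereal p) powr (1 / real_of_ereal p))"

definition pball :: "ereal \<Rightarrow> real \<Rightarrow> (real^'k) set" where
  "pball p e = {v. pnorm p v \<le> e}"

definition msum :: "'a::plus set \<Rightarrow> 'a set \<Rightarrow> 'a set" where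
  "msum A B = {a + b | a b. a \<in> A \<and> b \<in> B}"

definition rec_cone :: "'a::real_vector set \<Rightarrow> 'a set" where
  "rec_cone A = {y. \<forall>x\<in>A. \<forall>l::real. l \<ge> 0 \<longrightarrow> x + l *\<^sub>R y \<in> A}"

definition projY :: "((real^'n) \<times> (real^'m)) set \<Rightarrow> (real^'m) set" where
  "projY S = snd ` S"

definition CP_self_bounded :: "((real^'n) \<times> (real^'m)) set \<Rightarrow> bool" where
  "CP_self_bounded S \<longleftrightarrow> projY S \<noteq> UNIV \<and>
     (\<exists>F. finite F \<and> projY S \<subseteq> msum (convex hull F) (rec_cone (closure (projY S))))"

definition CP_finite_eps_solution ::
    "ereal \<Rightarrow> real \<Rightarrow> ((real^'n) \<times> (real^'m)) set \<Rightarrow> ((real^'n) \<times> (real^'m)) set \<Rightarrow> bool" where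
  "CP_finite_eps_solution p e S Sb \<longleftrightarrow> Sb \<noteq> {} \<and> finite Sb \<and> Sb \<subseteq> S \<and>
     projY S \<subseteq> msum (msum (convex hull (snd ` Sb)) (rec_cone (closure (projY S)))) (pball p e)"

(* objective of (MOCP): P(x,y) = (y, -1^T y) in R^(m+1), index None = last coordinate *)
definition Pobj :: "(real^'n) \<times> (real^'m) \<Rightarrow> real^('m option)" where
  "Pobj z = (\<chi> i. case i of Some j \<Rightarrow> snd z $ j | None \<Rightarrow> - (\<Sum>j\<in>UNIV. snd z $ j))"

definition nonneg_orthant :: "(real^'k) set" where
  "nonneg_orthant = {v. \<forall>i. 0 \<le> v $ i}"

definition upper_image :: "((real^'n) \<times> (real^'m)) set \<Rightarrow> (real^('m option)) set" where
  "upper_image S = closure (msum (Pobj ` S) nonneg_orthant)"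

definition ones :: "real^'k" where
  "ones = (\<chi> i. 1)"

definition MOCP_finite_eps_solution ::
    "ereal \<Rightarrow> real \<Rightarrow> ((real^'n) \<times> (real^'m)) set \<Rightarrow> ((real^'n) \<times> (real^'m)) set \<Rightarrow> bool" where
  "MOCP_finite_eps_solution p e S Sb \<longleftrightarrow> Sb \<noteq> {} \<and> finite Sb \<and> Sb \<subseteq> S \<and>
     upper_image S \<subseteq> msum (msum (convex hull (Pobj ` Sb)) (rec_cone (upper_image S)))
                          {- (e / pnorm p (ones :: real^('m option))) *\<^sub>R ones}"

definition kappa_low :: "nat \<Rightarrow> ereal \<Rightarrow> real" where
  "kappa_low m p = (if p = \<infinity> then real m
     else real m powr ((real_of_ereal p - 1) / real_of_ereal p) * real (m + 1) powr (1 / real_of_ereal p))"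

end

theory Submission
  imports Defs
begin

(* The map L y = (y, -1^T y) is linear, so it carries Y \<subseteq> conv + (cl Y)_\<infinity> + B_\<epsilon> into
   conv P[Sb] + L((cl Y)_\<infinity>) + L(B_\<epsilon>), and both L((cl Y)_\<infinity>) and the nonnegative orthant lie in
   the recession cone of the upper image. For \<parallel>b\<parallel>_p \<le> \<epsilon>, Hoelder's inequality bounds every
   coordinate of -L b, including -(-1^T b) = 1^T b, by \<delta> = m^((p-1)/p) \<epsilon>, so L b + \<delta> 1 is
   nonnegative. Since \<delta> = \<kappa> \<epsilon> / \<parallel>1\<parallel>_p, this proves the inclusion for P[S] + R^(m+1)_+, and
   it passes to the closure because a compact set plus a closed cone is closed. *)

lemma convex_on_powr_nonneg:
  assumes "1 \<le> q"
  shows "convex_on {0..} (\<lambda>x::real. x powr q)"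
proof
  fix t x y :: real
  assume t: "0 < t" "t < 1" and xy: "x \<in> {0..}" "y \<in> {0..}"
  have scale: "(s * z) powr q \<le> s * z powr q" if "0 \<le> s" "s \<le> 1" "0 \<le> z" for s z :: real
  proof -
    have "s powr q \<le> s"
      using powr_mono'[of 1 q s] that assms by (cases "s = 0") auto
    then show ?thesis
      using that by (simp add: powr_mult mult_right_mono)
  qed
  show "((1 - t) *\<^sub>R x + t *\<^sub>R y) powr q \<le> (1 - t) * x powr q + t * y powr q"
  proof (cases "x = 0 \<or> y = 0")
    case True
    then show ?thesis
      using scale[of "1 - t" x] scale[of t y] t xy by auto
  next
    case False
    then show ?thesis
      using convex_onD[OF powr_convex[OF assms], of t x y] t xy by auto
  qed
qed simp

lemma sum_le_card_powr_mult_sum_powr: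
  fixes a :: "'a \<Rightarrow> real"
  assumes "finite I" "\<And>i. i \<in> I \<Longrightarrow> 0 \<le> a i" "1 \<le> q"
  shows "(\<Sum>i\<in>I. a i) \<le> real (card I) powr ((q - 1) / q) * (\<Sum>i\<in>I. a i powr q) powr (1 / q)"
proof (cases "I = {}")
  case False
  define n where "n = real (card I)"
  define W where "W = (\<Sum>i\<in>I. a i powr q)"
  have n: "n > 0"
    using assms False by (simp add: n_def card_gt_0_iff)
  have S: "0 \<le> (\<Sum>i\<in>I. a i)"
    using assms by (simp add: sum_nonneg)
  have "((\<Sum>i\<in>I. a i) / n) powr q \<le> W / n"
    using convex_on_sum[OF assms(1) False convex_on_powr_nonneg[OF assms(3)],
        of "\<lambda>_. 1 / n" a] n assms(2)
    by (simp add: n_def W_def sum_divide_distrib)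
  then have "(\<Sum>i\<in>I. a i) powr q \<le> n powr (q - 1) * W"
    using n S by (simp add: powr_divide powr_diff field_simps)
  then have "((\<Sum>i\<in>I. a i) powr q) powr (1 / q) \<le> (n powr (q - 1) * W) powr (1 / q)"
    using assms(3) by (intro powr_mono2) auto
  moreover have "W \<ge> 0"
    by (simp add: W_def sum_nonneg)
  ultimately show ?thesis
    using n S assms(3) by (simp add: powr_powr powr_mult n_def W_def)
qed simp

definition l1_pnorm_const :: "nat \<Rightarrow> ereal \<Rightarrow> real" where
  "l1_pnorm_const m p = (if p = \<infinity> then real m
     else real m powr ((real_of_ereal p - 1) / real_of_ereal p))"

lemma ones_nth [simp]: "(ones :: real^'k) $ i = 1"
  by (simp add: ones_def)

lemma pnorm_eq_sum_powr:
  "p \<noteq> \<infinity> \<Longrightarrow> pnorm p v = (\<Sum>i\<in>UNIV. \<bar>v $ i\<bar> powr real_of_ereal p) powr (1 / real_of_ereal p)"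
  by (simp add: pnorm_def)

lemma abs_nth_le_pnorm:
  fixes v :: "real^'k"
  assumes "1 \<le> p"
  shows "\<bar>v $ i\<bar> \<le> pnorm p v"
proof (cases "p = \<infinity>")
  case True
  then show ?thesis by (simp add: pnorm_def)
next
  case False
  define q where "q = real_of_ereal p"
  have q: "1 \<le> q"
    using assms False by (cases p) (auto simp: q_def)
  have "\<bar>v $ i\<bar> = (\<bar>v $ i\<bar> powr q) powr (1 / q)"
    using q by (simp add: powr_powr)
  also have "\<dots> \<le> pnorm p v"
    using q False by (auto simp: pnorm_eq_sum_powr q_def intro!: powr_mono2 member_le_sum)
  finally show ?thesis .
qed

lemma sum_abs_le_pnorm:
  fixes v :: "real^'k"
  assumes "1 \<le> p"
  shows "(\<Sum>i\<in>UNIV. \<bar>v $ i\<bar>) \<le> l1_pnorm_const CARD('k) p * pnorm p v"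
proof (cases "p = \<infinity>")
  case True
  then show ?thesis
    using sum_bounded_above[of UNIV "\<lambda>i. \<bar>v $ i\<bar>" "pnorm p v"] abs_nth_le_pnorm[OF assms, of v]
    by (simp add: l1_pnorm_const_def)
next
  case False
  define q where "q = real_of_ereal p"
  have "1 \<le> q"
    using assms False by (cases p) (auto simp: q_def)
  then show ?thesis
    using sum_le_card_powr_mult_sum_powr[of UNIV "\<lambda>i. \<bar>v $ i\<bar>" q] False
    by (simp add: l1_pnorm_const_def pnorm_eq_sum_powr q_def)
qed

lemma one_le_l1_pnorm_const:
  assumes "1 \<le> m" "1 \<le> p"
  shows "1 \<le> l1_pnorm_const m p"
proof (cases "p = \<infinity>")
  case False
  then have "1 \<le> real_of_ereal p"
    using assms by (cases p) auto
  then show ?thesis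
    using assms False by (simp add: l1_pnorm_const_def ge_one_powr_ge_zero)
qed (use assms in \<open>simp add: l1_pnorm_const_def\<close>)

lemma pnorm_ones_pos: "0 < pnorm p (ones :: real^'k)"
  by (simp add: pnorm_def image_def)

lemma kappa_low_eq_l1_pnorm_const_mult_pnorm_ones:
  "kappa_low CARD('m::finite) p = l1_pnorm_const CARD('m) p * pnorm p (ones :: real^'m option)"
  by (simp add: kappa_low_def l1_pnorm_const_def pnorm_def image_def)

definition obj_map :: "real^'m \<Rightarrow> real^('m option)" where
  "obj_map y = (\<chi> i. case i of Some j \<Rightarrow> y $ j | None \<Rightarrow> - (\<Sum>j\<in>UNIV. y $ j))"

lemma Pobj_eq_obj_map: "Pobj z = obj_map (snd z)"
  by (simp add: Pobj_def obj_map_def)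

lemma linear_obj_map: "linear obj_map"
proof (rule linearI)
  show "obj_map (x + y) = obj_map x + obj_map y" for x y
    by (auto simp: vec_eq_iff obj_map_def sum.distrib split: option.split)
  show "obj_map (c *\<^sub>R x) = c *\<^sub>R obj_map x" for c x
    by (auto simp: vec_eq_iff obj_map_def sum_distrib_left split: option.split)
qed

lemma convex_hull_Pobj_image: "convex hull (Pobj ` A) = obj_map ` (convex hull (snd ` A))"
  by (simp add: convex_hull_linear_image[OF linear_obj_map] image_image Pobj_eq_obj_map)

lemma closed_rec_cone:
  fixes A :: "'a::real_normed_vector set"
  assumes "closed A"
  shows "closed (rec_cone A)"
proof -
  have "rec_cone A = (\<Inter>x\<in>A. \<Inter>l\<in>{0..}. (\<lambda>y. x + l *\<^sub>R y) -` A)"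
    by (auto simp: rec_cone_def)
  moreover have "closed ((\<lambda>y. x + l *\<^sub>R y) -` A)" for x and l :: real
    using assms by (intro continuous_closed_vimage) (auto intro!: continuous_intros)
  ultimately show ?thesis
    by (simp add: closed_INT)
qed

lemma rec_cone_add: "u \<in> rec_cone A \<Longrightarrow> v \<in> rec_cone A \<Longrightarrow> u + v \<in> rec_cone A"
  unfolding rec_cone_def by (simp add: scaleR_right_distrib flip: add.assoc)

lemma rec_cone_closureI:
  fixes A :: "'a::real_normed_vector set"
  assumes "\<And>a l. a \<in> A \<Longrightarrow> 0 \<le> l \<Longrightarrow> a + l *\<^sub>R v \<in> closure A"
  shows "v \<in> rec_cone (closure A)"
  unfolding rec_cone_def
proof (intro CollectI ballI allI impI)
  fix x and l :: real
  assume "x \<in> closure A" "0 \<le> l"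
  moreover have "(\<lambda>z. z + l *\<^sub>R v) ` closure A \<subseteq> closure A"
    using assms \<open>0 \<le> l\<close> by (intro image_closure_subset) (auto intro!: continuous_intros)
  ultimately show "x + l *\<^sub>R v \<in> closure A"
    by blast
qed

lemma nonneg_orthant_subset_rec_cone_upper_image:
  fixes S :: "((real^'n) \<times> (real^'m)) set"
  shows "nonneg_orthant \<subseteq> rec_cone (upper_image S)"
proof
  fix v :: "real^'m option"
  assume v: "v \<in> nonneg_orthant"
  show "v \<in> rec_cone (upper_image S)"
    unfolding upper_image_def
  proof (rule rec_cone_closureI)
    fix a and l :: real
    assume "a \<in> msum (Pobj ` S) nonneg_orthant" "0 \<le> l"
    then obtain u r where u: "u \<in> Pobj ` S" and r: "r \<in> nonneg_orthant" and a: "a = u + r"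
      unfolding msum_def by blast
    have "r + l *\<^sub>R v \<in> nonneg_orthant"
      using r v \<open>0 \<le> l\<close> by (simp add: nonneg_orthant_def)
    then have "u + (r + l *\<^sub>R v) \<in> msum (Pobj ` S) nonneg_orthant"
      using u unfolding msum_def by blast
    then show "a + l *\<^sub>R v \<in> closure (msum (Pobj ` S) nonneg_orthant)"
      using a closure_subset by (auto simp: add.assoc)
  qed
qed

lemma obj_map_rec_cone_subset_rec_cone_upper_image:
  fixes S :: "((real^'n) \<times> (real^'m)) set"
  shows "obj_map ` rec_cone (closure (projY S)) \<subseteq> rec_cone (upper_image S)"
proof (rule image_subsetI)
  fix c
  assume c: "c \<in> rec_cone (closure (projY S))"
  show "obj_map c \<in> rec_cone (upper_image S)"
    unfolding upper_image_def
  proof (rule rec_cone_closureI)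
    fix a and l :: real
    assume "a \<in> msum (Pobj ` S) nonneg_orthant" "0 \<le> l"
    then obtain s r where s: "s \<in> S" and r: "r \<in> nonneg_orthant" and a: "a = Pobj s + r"
      by (auto simp: msum_def)
    have "snd s \<in> closure (projY S)"
      using s by (intro subsetD[OF closure_subset]) (simp add: projY_def)
    then have shifted: "snd s + l *\<^sub>R c \<in> closure (projY S)"
      using c \<open>0 \<le> l\<close> unfolding rec_cone_def by blast
    have image: "(\<lambda>y. obj_map y + r) ` closure (projY S) \<subseteq> closure (msum (Pobj ` S) nonneg_orthant)"
    proof (rule image_closure_subset)
      show "continuous_on (closure (projY S)) (\<lambda>y. obj_map y + r)"
        using linear_obj_map
        by (intro continuous_intros linear_continuous_on) (simp add: linear_conv_bounded_linear)
      have "obj_map y + r \<in> msum (Pobj ` S) nonneg_orthant" if "y \<in> projY S" for y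
      proof -
        from that obtain t where "t \<in> S" "y = snd t"
          unfolding projY_def by blast
        then have "obj_map y \<in> Pobj ` S"
          by (simp add: Pobj_eq_obj_map)
        then show ?thesis
          using r unfolding msum_def by blast
      qed
      then show "(\<lambda>y. obj_map y + r) ` projY S \<subseteq> closure (msum (Pobj ` S) nonneg_orthant)"
        using closure_subset by blast
    qed simp
    have "a + l *\<^sub>R obj_map c = obj_map (snd s + l *\<^sub>R c) + r"
      using a by (simp add: Pobj_eq_obj_map linear_add[OF linear_obj_map]
          linear_scale[OF linear_obj_map] algebra_simps)
    then show "a + l *\<^sub>R obj_map c \<in> closure (msum (Pobj ` S) nonneg_orthant)"
      using subsetD[OF image imageI[OF shifted]] by simp
  qed
qed

lemma closed_msum_compact:
  fixes K R :: "'a::real_normed_vector set"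
  assumes "compact K" "closed R"
  shows "closed (msum K R)"
proof -
  have "msum K R = (\<Union>x\<in>K. \<Union>y\<in>R. {x + y})"
    by (auto simp: msum_def)
  then show ?thesis
    using compact_closed_sums[OF assms] by simp
qed

lemma closed_msum_singleton:
  fixes A :: "'a::real_normed_vector set"
  assumes "closed A"
  shows "closed (msum A {c})"
proof -
  have "msum A {c} = (+) c ` A"
    by (force simp: msum_def add.commute)
  then show ?thesis
    using closed_translation[OF assms] by simp
qed

lemma obj_map_plus_nonneg_of_pnorm_le:
  fixes b :: "real^'m"
  assumes "1 \<le> p" "pnorm p b \<le> e"
  shows "obj_map b + (l1_pnorm_const CARD('m) p * e) *\<^sub>R ones \<in> nonneg_orthant"
proof -
  let ?c = "l1_pnorm_const CARD('m) p"
  have "0 \<le> e"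
    using abs_nth_le_pnorm[OF assms(1), of b] assms(2) by (meson abs_ge_zero order_trans)
  moreover have "1 \<le> ?c"
    using one_le_l1_pnorm_const[of "CARD('m)"] assms(1) by (simp add: Suc_le_eq)
  ultimately have "e \<le> ?c * e"
    by (simp add: mult_le_cancel_right1)
  then have coord: "0 \<le> b $ j + ?c * e" for j
    using abs_nth_le_pnorm[OF assms(1), of b j] assms(2) by linarith
  have "(\<Sum>j\<in>UNIV. b $ j) \<le> (\<Sum>j\<in>UNIV. \<bar>b $ j\<bar>)"
    by (intro sum_mono) simp
  also have "\<dots> \<le> ?c * pnorm p b"
    using sum_abs_le_pnorm[OF assms(1)] .
  also have "\<dots> \<le> ?c * e"
    using \<open>1 \<le> ?c\<close> assms(2) by simp
  finally show ?thesis
    using coord by (auto simp: nonneg_orthant_def obj_map_def split: option.split)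
qed

lemma Pobj_plus_nonneg_orthant_subset:
  fixes S Sb :: "((real^'n) \<times> (real^'m)) set"
  assumes "1 \<le> p" "CP_finite_eps_solution p e S Sb"
  shows "msum (Pobj ` S) nonneg_orthant
    \<subseteq> msum (msum (convex hull (Pobj ` Sb)) (rec_cone (upper_image S)))
         {- (l1_pnorm_const CARD('m) p * e) *\<^sub>R ones}"
proof
  fix z
  assume "z \<in> msum (Pobj ` S) nonneg_orthant"
  then obtain s r where s: "s \<in> S" and r: "r \<in> nonneg_orthant" and z: "z = Pobj s + r"
    by (auto simp: msum_def)
  define \<delta> where "\<delta> = l1_pnorm_const CARD('m) p * e"
  have "snd s \<in> msum (msum (convex hull (snd ` Sb)) (rec_cone (closure (projY S)))) (pball p e)"
    using assms(2) s unfolding CP_finite_eps_solution_def projY_def by blast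
  then obtain c d b where c: "c \<in> convex hull (snd ` Sb)" and d: "d \<in> rec_cone (closure (projY S))"
    and b: "pnorm p b \<le> e" and sd: "snd s = c + d + b"
    unfolding msum_def pball_def by blast
  define v where "v = obj_map d + (obj_map b + \<delta> *\<^sub>R ones) + r"
  have "obj_map c \<in> convex hull (Pobj ` Sb)"
    using c by (simp add: convex_hull_Pobj_image)
  moreover have "v \<in> rec_cone (upper_image S)"
  proof -
    have "obj_map d \<in> rec_cone (upper_image S)"
      using d obj_map_rec_cone_subset_rec_cone_upper_image by blast
    moreover have "obj_map b + \<delta> *\<^sub>R ones \<in> rec_cone (upper_image S)" "r \<in> rec_cone (upper_image S)"
      using r obj_map_plus_nonneg_of_pnorm_le[OF assms(1) b] nonneg_orthant_subset_rec_cone_upper_image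
      unfolding \<delta>_def by blast+
    ultimately show ?thesis
      unfolding v_def by (rule rec_cone_add[OF rec_cone_add])
  qed
  moreover have "z = obj_map c + v + - \<delta> *\<^sub>R ones"
    using z sd by (simp add: v_def Pobj_eq_obj_map linear_add[OF linear_obj_map] algebra_simps)
  ultimately show "z \<in> msum (msum (convex hull (Pobj ` Sb)) (rec_cone (upper_image S)))
      {- (l1_pnorm_const CARD('m) p * e) *\<^sub>R ones}"
    unfolding msum_def \<delta>_def by blast
qed

theorem mainTheorem6:
  fixes S Sb :: "((real^'n) \<times> (real^'m)) set" and p :: ereal and e :: real
  assumes "convex S"
    and "CP_self_bounded S"
    and "1 \<le> p"
    and "e > 0"
    and "CP_finite_eps_solution p e S Sb"
  shows "MOCP_finite_eps_solution p (kappa_low CARD('m) p * e) S Sb"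
proof -
  have Sb: "Sb \<noteq> {}" "finite Sb" "Sb \<subseteq> S"
    using assms(5) by (auto simp: CP_finite_eps_solution_def)
  have shift: "kappa_low CARD('m) p * e / pnorm p (ones :: real^'m option)
      = l1_pnorm_const CARD('m) p * e"
    using pnorm_ones_pos[of p, where 'k = "'m option"]
    by (simp add: kappa_low_eq_l1_pnorm_const_mult_pnorm_ones)
  have "closed (msum (msum (convex hull (Pobj ` Sb)) (rec_cone (upper_image S)))
      {- (l1_pnorm_const CARD('m) p * e) *\<^sub>R ones})"
    using Sb by (intro closed_msum_singleton closed_msum_compact closed_rec_cone
        finite_imp_compact_convex_hull) (auto simp: upper_image_def)
  with Pobj_plus_nonneg_orthant_subset[OF assms(3,5)]
  have "upper_image S \<subseteq> msum (msum (convex hull (Pobj ` Sb)) (rec_cone (upper_image S)))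
      {- (l1_pnorm_const CARD('m) p * e) *\<^sub>R ones}"
    unfolding upper_image_def by (rule closure_minimal)
  then show ?thesis
    using Sb shift by (simp add: MOCP_finite_eps_solution_def)
qed

end
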